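(* Fix $N\ge1$, $L>0$, $\alpha>0$. There is a lower triangular matrix $H\in\mathbb{R}^{2N\times 2N}$ such that for every $d\ge1$, every operator $\mathbb{A}\colon\mathbb{R}^d\to\mathbb{R}^d$ and every $x_0\in\mathbb{R}^d$: (i) the iterates $x_0,x_{1/2},x_1,\dots,x_N$ of the Fast Extragradient method \[ x_{k+1/2}=x_k+\tfrac{1}{k+1}(x_0-x_k)-\tfrac{k}{k+1}\alpha\mathbb{A}x_k,\qquad x_{k+1}=x_k+\tfrac{1}{k+1}(x_0-x_k)-\alpha\mathbb{A}x_{k+1/2}\quad(k=0,\dots,N-1) \] satisfy $x_{(\ell+1)/2}=x_{\ell/2}-\frac1L\sum_{i=0}^{\ell}H_{\ell+1,i+1}\,\mathbb{A}x_{i/2}$ for $\ell=0,1,\dots,2N-1$; and (ii) the iterates $x_0,x_{1/2},x_1,\dots,x_N$ of the Dual Fast Extragradient method \[ x_{k+1/2}=x_k-\alpha z_k-\alpha\mathbb{A}x_k,\quad x_{k+1}=x_{k+1/2}-\tfrac{N-k-1}{N-k}\alpha(\mathbb{A}x_{k+1/2}-\mathbb{A}x_k),\quad z_{k+1}=\tfrac{N-k-1}{N-k}z_k-\tfrac{1}{N-k}\mathbb{A}x_{k+1/2} \] ($k=0,\dots,N-1$, $z_0=0$) satisfy $x_{(\ell+1)/2}=x_{\ell/2}-\frac1L\sum_{i=0}^{\ell}(H^A)_{\ell+1,i+1}\,\mathbb{A}x_{i/2}$ for $\ell=0,\dots,2N-1$, where $(H^A)_{\ell,i}=H_{2N+1-i,\,2N+1-\ell}$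 is the anti-diagonal transpose. That is, the two methods are H-duals of each other.
   Context: Rows and columns of $2N\times2N$ matrices are indexed $1,\dots,2N$. The iterates are indexed by half-integers $\ell/2$, $\ell=0,\dots,2N$. *)

theory Defs
  imports Main "HOL.Real"
begin

text \<open>Vectors of R^d are represented as functions nat \<Rightarrow> real vanishing at indices \<ge> d
  (so that the dimension d can be quantified inside the statement, after the matrix H).\<close>

type_synonym vec = "nat \<Rightarrow> real"

definition in_Rd :: "nat \<Rightarrow> vec \<Rightarrow> bool" where
  "in_Rd d v \<longleftrightarrow> (\<forall>i\<ge>d. v i = 0)"

definition operator_on_Rd :: "nat \<Rightarrow> (vec \<Rightarrow> vec) \<Rightarrow> bool" where
  "operator_on_Rd d A \<longleftrightarrow> (\<forall>v. in_Rd d v \<longrightarrow> in_Rd d (A v))"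

definition feg_half :: "real \<Rightarrow> (vec \<Rightarrow> vec) \<Rightarrow> vec \<Rightarrow> nat \<Rightarrow> vec \<Rightarrow> vec" where
  "feg_half \<alpha> A x0 k xk = (\<lambda>j. xk j + (1 / real (k+1)) * (x0 j - xk j)
                                 - (real k / real (k+1)) * \<alpha> * A xk j)"

fun feg_x :: "real \<Rightarrow> (vec \<Rightarrow> vec) \<Rightarrow> vec \<Rightarrow> nat \<Rightarrow> vec" where
  "feg_x \<alpha> A x0 0 = x0"
| "feg_x \<alpha> A x0 (Suc k) =
     (let xk = feg_x \<alpha> A x0 k; xh = feg_half \<alpha> A x0 k xk in
      (\<lambda>j. xk j + (1 / real (k+1)) * (x0 j - xk j) - \<alpha> * A xh j))"

definition feg_iter :: "real \<Rightarrow> (vec \<Rightarrow> vec) \<Rightarrow> vec \<Rightarrow> nat \<Rightarrow> vec" where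
  "feg_iter \<alpha> A x0 l =
     (if even l then feg_x \<alpha> A x0 (l div 2)
      else feg_half \<alpha> A x0 (l div 2) (feg_x \<alpha> A x0 (l div 2)))"

definition dfeg_half :: "real \<Rightarrow> (vec \<Rightarrow> vec) \<Rightarrow> vec \<Rightarrow> vec \<Rightarrow> vec" where
  "dfeg_half \<alpha> A xk zk = (\<lambda>j. xk j - \<alpha> * zk j - \<alpha> * A xk j)"

fun dfeg_state :: "nat \<Rightarrow> real \<Rightarrow> (vec \<Rightarrow> vec) \<Rightarrow> vec \<Rightarrow> nat \<Rightarrow> vec \<times> vec" where
  "dfeg_state N \<alpha> A x0 0 = (x0, (\<lambda>j. 0))"
| "dfeg_state N \<alpha> A x0 (Suc k) =
     (let (xk, zk) = dfeg_state N \<alpha> A x0 k;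
          xh = dfeg_half \<alpha> A xk zk;
          c = real (N - k - 1) / real (N - k) in
      ((\<lambda>j. xh j - c * \<alpha> * (A xh j - A xk j)),
       (\<lambda>j. c * zk j - (1 / real (N - k)) * A xh j)))"

definition dfeg_iter :: "nat \<Rightarrow> real \<Rightarrow> (vec \<Rightarrow> vec) \<Rightarrow> vec \<Rightarrow> nat \<Rightarrow> vec" where
  "dfeg_iter N \<alpha> A x0 l =
     (let (xk, zk) = dfeg_state N \<alpha> A x0 (l div 2) in
      if even l then xk else dfeg_half \<alpha> A xk zk)"

text \<open>Matrices with rows/columns indexed 1..2N, as functions nat \<Rightarrow> nat \<Rightarrow> real.\<close>

definition lower_triangular :: "(nat \<Rightarrow> nat \<Rightarrow> real) \<Rightarrow> bool" where
  "lower_triangular H \<longleftrightarrow> (\<forall>i j. i < j \<longrightarrow> H i j = 0)"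

definition anti_transpose :: "nat \<Rightarrow> (nat \<Rightarrow> nat \<Rightarrow> real) \<Rightarrow> nat \<Rightarrow> nat \<Rightarrow> real" where
  "anti_transpose N H = (\<lambda>l i. H (2*N + 1 - i) (2*N + 1 - l))"

end

theory Submission
  imports Defs
begin

text \<open>Both methods are linear recursions in the queried operator values, with coefficients that
  do not depend on the operator. For FEG the anchoring term telescopes to
  x_k = x_0 - (\<alpha>/k) \<Sum>_{m<k} (m+1) A x_{m+1/2}; for Dual-FEG the dual variable unrolls to
  z_k = -(N-k) \<Sum>_{m<k} A x_{m+1/2} / ((N-m)(N-m-1)). Substituting these into the update rules
  writes every step as -\<alpha> times a fixed combination of the past operator values, which
  determines H, and reflecting the index pairs through the anti-diagonal turns the rows of FEG
  into exactly those of Dual-FEG.\<close>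

lemma sum_atLeast0_atMost_even_in_pairs:
  fixes g :: "nat \<Rightarrow> 'a::comm_monoid_add"
  shows "(\<Sum>i = 0..2*k. g i) = (\<Sum>m<k. g (2*m) + g (Suc (2*m))) + g (2*k)"
  by (induction k) (simp_all add: sum.atLeast0_atMost_Suc ac_simps)

lemma sum_atLeast0_atMost_odd_in_pairs:
  fixes g :: "nat \<Rightarrow> 'a::comm_monoid_add"
  shows "(\<Sum>i = 0..Suc (2*k). g i) =
    (\<Sum>m<k. g (2*m) + g (Suc (2*m))) + (g (2*k) + g (Suc (2*k)))"
  using sum_atLeast0_atMost_even_in_pairs [of g k] by (simp add: add.assoc)

lemma reflect_double_index:
  assumes "m < N"
  shows "2*N - Suc (2*m) = Suc (2*(N - Suc m))" and "2*N - Suc (Suc (2*m)) = 2*(N - Suc m)"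
  using assms by arith+

text \<open>Row l holds the coefficients of the step from x_{l/2} to x_{(l+1)/2}, indexed from 0 and
  normalised by the step size \<alpha>; the matrix H of the theorem is L \<alpha> times its shift to indices
  starting at 1.\<close>

definition feg_coeff :: "nat \<Rightarrow> nat \<Rightarrow> real" where
  "feg_coeff l i =
     (let k = l div 2 in
      if even l then
        (if i = l then real k / real (k + 1)
         else if odd i \<and> i < l then - real (i div 2 + 1) / (real k * real (k + 1))
         else 0)
      else (if i = l then 1 else if i = l - 1 then - real k / real (k + 1) else 0))"

lemma feg_coeff_even:
  "feg_coeff (2*k) i =
     (if i = 2*k then real k / real (k + 1)
      else if odd i \<and> i < 2*k then - real (i div 2 + 1) / (real k * real (k + 1))
      else 0)"
  by (simp add: feg_coeff_def)

lemma feg_coeff_odd: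
  "feg_coeff (Suc (2*k)) i =
     (if i = Suc (2*k) then 1 else if i = 2*k then - real k / real (k + 1) else 0)"
  by (simp add: feg_coeff_def)

lemma feg_coeff_eq_0_above_diagonal: "l < i \<Longrightarrow> feg_coeff l i = 0"
  by (simp add: feg_coeff_def Let_def)

lemma feg_coeff_row_even:
  "(\<Sum>i = 0..2*k. feg_coeff (2*k) i * g i) =
     real k / real (k + 1) * g (2*k)
     - (\<Sum>m<k. real (m + 1) * g (Suc (2*m))) / (real k * real (k + 1))"
proof -
  have "(\<Sum>i = 0..2*k. feg_coeff (2*k) i * g i) =
      (\<Sum>m<k. - (real (m + 1) * g (Suc (2*m)) / (real k * real (k + 1))))
      + real k / real (k + 1) * g (2*k)"
    unfolding sum_atLeast0_atMost_even_in_pairs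
    by (intro arg_cong2 [where f = "(+)"] sum.cong)
      (simp_all add: feg_coeff_even divide_simps, simp add: algebra_simps)
  then show ?thesis
    by (simp add: sum_negf sum_divide_distrib)
qed

lemma feg_coeff_row_odd:
  "(\<Sum>i = 0..Suc (2*k). feg_coeff (Suc (2*k)) i * g i) =
     g (Suc (2*k)) - real k / real (k + 1) * g (2*k)"
  unfolding sum_atLeast0_atMost_odd_in_pairs by (simp add: feg_coeff_odd)

lemma feg_iter_half_step:
  "feg_iter \<alpha> A x0 (Suc (2*k)) j =
     feg_iter \<alpha> A x0 (2*k) j + (x0 j - feg_iter \<alpha> A x0 (2*k) j) / real (k + 1)
     - real k / real (k + 1) * \<alpha> * A (feg_iter \<alpha> A x0 (2*k)) j"
  by (simp add: feg_iter_def feg_half_def)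

lemma feg_iter_full_step:
  "feg_iter \<alpha> A x0 (2 * Suc k) j =
     feg_iter \<alpha> A x0 (2*k) j + (x0 j - feg_iter \<alpha> A x0 (2*k) j) / real (k + 1)
     - \<alpha> * A (feg_iter \<alpha> A x0 (Suc (2*k))) j"
  by (simp add: feg_iter_def Let_def)

text \<open>At k = 0 the right-hand side is x0 j because the sum is empty (and \<alpha> / 0 = 0).\<close>

lemma feg_iter_even_closed_form:
  "feg_iter \<alpha> A x0 (2*k) j =
     x0 j - \<alpha> / real k * (\<Sum>m<k. real (m + 1) * A (feg_iter \<alpha> A x0 (Suc (2*m))) j)"
proof (induction k)
  case 0
  show ?case by (simp add: feg_iter_def)
next
  case (Suc k)
  define S where "S = (\<Sum>m<k. real (m + 1) * A (feg_iter \<alpha> A x0 (Suc (2*m))) j)"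
  have "feg_iter \<alpha> A x0 (2*k) j + (x0 j - feg_iter \<alpha> A x0 (2*k) j) / real (k + 1)
      = x0 j - \<alpha> * S / real (k + 1)"
  proof (cases "k = 0")
    case True
    then show ?thesis by (simp add: S_def feg_iter_def)
  next
    case False
    with Suc.IH [folded S_def] show ?thesis by (simp add: field_simps)
  qed
  moreover have "(\<Sum>m<Suc k. real (m + 1) * A (feg_iter \<alpha> A x0 (Suc (2*m))) j) =
      S + real (k + 1) * A (feg_iter \<alpha> A x0 (Suc (2*k))) j"
    by (simp add: S_def)
  ultimately show ?case
    unfolding feg_iter_full_step by (simp add: field_simps)
qed

lemma feg_iter_step_coeffs:
  "feg_iter \<alpha> A x0 (l + 1) j =
     feg_iter \<alpha> A x0 l j - \<alpha> * (\<Sum>i = 0..l. feg_coeff l i * A (feg_iter \<alpha> A x0 i) j)"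
proof (cases "even l")
  case True
  then obtain k where l: "l = 2*k" by blast
  then have l1: "l + 1 = Suc (2*k)" by simp
  define S where "S = (\<Sum>m<k. real (m + 1) * A (feg_iter \<alpha> A x0 (Suc (2*m))) j)"
  have "x0 j - feg_iter \<alpha> A x0 (2*k) j = \<alpha> / real k * S"
    by (simp add: feg_iter_even_closed_form S_def)
  then have "(x0 j - feg_iter \<alpha> A x0 (2*k) j) / real (k + 1) = \<alpha> * S / (real k * real (k + 1))"
    by simp
  then show ?thesis
    unfolding l1 l feg_coeff_row_even S_def [symmetric]
    using feg_iter_half_step [of \<alpha> A x0 k j] by (simp add: algebra_simps)
next
  case False
  then obtain k where l: "l = Suc (2*k)" by (metis oddE Suc_eq_plus1)
  then have l1: "l + 1 = 2 * Suc k" by simp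
  show ?thesis
    unfolding l1 unfolding l feg_coeff_row_odd
    using feg_iter_full_step [of \<alpha> A x0 k j] feg_iter_half_step [of \<alpha> A x0 k j]
    by (simp add: algebra_simps)
qed

definition dfeg_coeff :: "nat \<Rightarrow> nat \<Rightarrow> nat \<Rightarrow> real" where
  "dfeg_coeff N l i = feg_coeff (2*N - 1 - i) (2*N - 1 - l)"

lemma dfeg_coeff_row_even:
  assumes "k < N"
  shows "(\<Sum>i = 0..2*k. dfeg_coeff N (2*k) i * g i) =
    g (2*k) - real (N - k) * (\<Sum>m<k. g (Suc (2*m)) / (real (N - m) * real (N - m - 1)))"
proof -
  have "dfeg_coeff N (2*k) (2*m) = (if m = k then 1 else 0)" if "m \<le> k" for m
    using that assms by (auto simp: dfeg_coeff_def reflect_double_index feg_coeff_odd)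
  moreover have "dfeg_coeff N (2*k) (Suc (2*m)) =
      - real (N - k) / (real (N - m) * real (N - m - 1))" if "m < k" for m
    using that assms by (simp add: dfeg_coeff_def reflect_double_index feg_coeff_even Suc_diff_Suc)
  ultimately show ?thesis
    unfolding sum_atLeast0_atMost_even_in_pairs
    by (simp add: sum_distrib_left sum_negf [symmetric])
qed

lemma dfeg_coeff_row_odd:
  assumes "k < N"
  shows "(\<Sum>i = 0..Suc (2*k). dfeg_coeff N (Suc (2*k)) i * g i) =
    real (N - k - 1) / real (N - k) * (g (Suc (2*k)) - g (2*k))"
proof -
  have "dfeg_coeff N (Suc (2*k)) (2*m) = (if m = k then - real (N - k - 1) / real (N - k) else 0)"
    if "m \<le> k" for m
    using that assms by (simp add: dfeg_coeff_def reflect_double_index feg_coeff_odd Suc_diff_Suc)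
  moreover have "dfeg_coeff N (Suc (2*k)) (Suc (2*m)) =
      (if m = k then real (N - k - 1) / real (N - k) else 0)" if "m \<le> k" for m
    using that assms by (simp add: dfeg_coeff_def reflect_double_index feg_coeff_even Suc_diff_Suc)
  ultimately show ?thesis
    unfolding sum_atLeast0_atMost_odd_in_pairs by (simp add: algebra_simps)
qed

lemma dfeg_iter_half_step:
  "dfeg_iter N \<alpha> A x0 (Suc (2*k)) j =
     dfeg_iter N \<alpha> A x0 (2*k) j - \<alpha> * snd (dfeg_state N \<alpha> A x0 k) j
     - \<alpha> * A (dfeg_iter N \<alpha> A x0 (2*k)) j"
  by (simp add: dfeg_iter_def dfeg_half_def case_prod_beta)

lemma dfeg_iter_full_step:
  "dfeg_iter N \<alpha> A x0 (2 * Suc k) j =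
     dfeg_iter N \<alpha> A x0 (Suc (2*k)) j - real (N - k - 1) / real (N - k) * \<alpha> *
       (A (dfeg_iter N \<alpha> A x0 (Suc (2*k))) j - A (dfeg_iter N \<alpha> A x0 (2*k)) j)"
  by (simp add: dfeg_iter_def case_prod_beta Let_def)

lemma dfeg_z_closed_form:
  "k < N \<Longrightarrow> snd (dfeg_state N \<alpha> A x0 k) j =
     - real (N - k) * (\<Sum>m<k. A (dfeg_iter N \<alpha> A x0 (Suc (2*m))) j / (real (N - m) * real (N - m - 1)))"
proof (induction k)
  case 0
  show ?case by simp
next
  case (Suc k)
  define G where "G m = A (dfeg_iter N \<alpha> A x0 (Suc (2*m))) j" for m
  define S where "S = (\<Sum>m<k. G m / (real (N - m) * real (N - m - 1)))"
  have "snd (dfeg_state N \<alpha> A x0 (Suc k)) j =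
      real (N - k - 1) / real (N - k) * snd (dfeg_state N \<alpha> A x0 k) j - G k / real (N - k)"
    by (simp add: G_def dfeg_iter_def dfeg_half_def case_prod_beta Let_def)
  also have "\<dots> = - real (N - k - 1) * S - G k / real (N - k)"
  proof -
    have "snd (dfeg_state N \<alpha> A x0 k) j = - real (N - k) * S"
      using Suc by (simp add: S_def G_def)
    moreover have "real (N - k) \<noteq> 0"
      using Suc.prems by simp
    ultimately show ?thesis by (simp del: of_nat_diff)
  qed
  also have "\<dots> = - real (N - Suc k) * (S + G k / (real (N - k) * real (N - k - 1)))"
    using Suc.prems by (simp del: of_nat_diff add: field_simps)
  finally show ?case
    by (simp add: S_def G_def)
qed

lemma dfeg_iter_step_coeffs:
  assumes "l < 2*N"
  shows "dfeg_iter N \<alpha> A x0 (l + 1) j =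
    dfeg_iter N \<alpha> A x0 l j - \<alpha> * (\<Sum>i = 0..l. dfeg_coeff N l i * A (dfeg_iter N \<alpha> A x0 i) j)"
proof (cases "even l")
  case True
  then obtain k where l: "l = 2*k" by blast
  then have l1: "l + 1 = Suc (2*k)" and "k < N" using assms by simp_all
  then show ?thesis
    unfolding l1 l dfeg_coeff_row_even [OF \<open>k < N\<close>]
    using dfeg_iter_half_step [of N \<alpha> A x0 k j] dfeg_z_closed_form [OF \<open>k < N\<close>, of \<alpha> A x0 j]
    by (simp add: algebra_simps)
next
  case False
  then obtain k where l: "l = Suc (2*k)" by (metis oddE Suc_eq_plus1)
  then have l1: "l + 1 = 2 * Suc k" and "k < N" using assms by simp_all
  then show ?thesis
    unfolding l1 unfolding l dfeg_coeff_row_odd [OF \<open>k < N\<close>]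
    using dfeg_iter_full_step [of N \<alpha> A x0 k j] by (simp add: algebra_simps)
qed

lemma lower_triangular_shifted_feg_coeff:
  "lower_triangular (\<lambda>r c. a * feg_coeff (r - 1) (c - 1))"
proof -
  have "feg_coeff (r - 1) (c - 1) = 0" if "r < c" for r c
  proof (cases "c = 1")
    case True
    with that show ?thesis by (simp add: feg_coeff_def)
  next
    case False
    with that show ?thesis by (simp add: feg_coeff_eq_0_above_diagonal)
  qed
  then show ?thesis
    by (simp add: lower_triangular_def)
qed

lemma anti_transpose_shifted_feg_coeff:
  "anti_transpose N (\<lambda>r c. a * feg_coeff (r - 1) (c - 1)) (l + 1) (i + 1) = a * dfeg_coeff N l i"
  by (simp add: anti_transpose_def dfeg_coeff_def)

theorem proposition6p2:
  fixes N :: nat and L \<alpha> :: real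
  assumes "N \<ge> 1" and "L > 0" and "\<alpha> > 0"
  shows "\<exists>H :: nat \<Rightarrow> nat \<Rightarrow> real. lower_triangular H \<and>
    (\<forall>d \<ge> 1. \<forall>(A :: vec \<Rightarrow> vec) (x0 :: vec). operator_on_Rd d A \<and> in_Rd d x0 \<longrightarrow>
       (\<forall>l < 2*N. \<forall>j < d.
          feg_iter \<alpha> A x0 (l+1) j = feg_iter \<alpha> A x0 l j
            - (1/L) * (\<Sum>i = 0..l. H (l+1) (i+1) * A (feg_iter \<alpha> A x0 i) j)) \<and>
       (\<forall>l < 2*N. \<forall>j < d.
          dfeg_iter N \<alpha> A x0 (l+1) j = dfeg_iter N \<alpha> A x0 l j
            - (1/L) * (\<Sum>i = 0..l. anti_transpose N H (l+1) (i+1) * A (dfeg_iter N \<alpha> A x0 i) j)))"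
proof -
  define H where "H r c = L * \<alpha> * feg_coeff (r - 1) (c - 1)" for r c
  have "(1/L) * (\<Sum>i = 0..l. H (l+1) (i+1) * g i) = \<alpha> * (\<Sum>i = 0..l. feg_coeff l i * g i)"
    for l g
    using \<open>L > 0\<close> by (simp add: H_def sum_distrib_left algebra_simps)
  moreover have "(1/L) * (\<Sum>i = 0..l. anti_transpose N H (l+1) (i+1) * g i) =
      \<alpha> * (\<Sum>i = 0..l. dfeg_coeff N l i * g i)" for l g
    using \<open>L > 0\<close> unfolding H_def anti_transpose_shifted_feg_coeff
    by (simp add: sum_distrib_left algebra_simps)
  moreover have "lower_triangular H"
    unfolding H_def by (rule lower_triangular_shifted_feg_coeff)
  ultimately show ?thesis
    using feg_iter_step_coeffs dfeg_iter_step_coeffs by (intro exI [of _ H]) auto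
qed

end
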